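(* Let $\mathbf{p}$ be a finite list of distinct predicate constants, and for each $p\in\mathbf{p}$ let $u_p$, $\widehat u_p$ be predicate variables of the same arity as $p$; let $\mathbf{u}$, $\widehat{\mathbf{u}}$ be the lists of these variables and $\neg\mathbf{p}$ the list of predicate expressions $\lambda\mathbf{x}\,\neg p(\mathbf{x})$ for $p\in\mathbf{p}$. Then the formula $(\mathbf{u},\widehat{\mathbf{u}})<(\mathbf{p},\neg\mathbf{p})$ is logically equivalent to $$\bigvee_{p\in\mathbf{p}}\Big(\big((\mathbf{u},\widehat{\mathbf{u}})\le(\mathbf{p},\neg\mathbf{p})\big)\land\exists\mathbf{x}\big(\neg u_p(\mathbf{x})\land\neg\widehat u_p(\mathbf{x})\big)\Big).$$
   Context: For predicates or predicate expressions $p,q$ of the same arity, $p\le q$ denotes $\forall\mathbf{x}(p(\mathbf{x})\to q(\mathbf{x}))$, where $\mathbf{x}$ is a tuple of distinct object variables. For tuples $\mathbf{p}=(p_1,\dots,p_n)$, $\mathbf{q}=(q_1,\dots,q_n)$, $\mathbf{p}\le\mathbf{q}$ denotes $(p_1\le q_1)\land\dots\land(p_n\le q_n)$ and $\mathbf{p}<\mathbf{q}$ denotes $(\mathbf{p}\le\mathbf{q})\land\neg(\mathbf{q}\le\mathbf{p})$. Here $(\mathbf{u},\widehat{\mathbf{u}})$ and $(\mathbf{p},\neg\mathbf{p})$ are concatenated tuples, with $\widehat u_p$ matched to $\lambda\mathbf{x}\neg p(\mathbf{x})$. *)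

theory Defs
  imports Main
begin

text \<open>A predicate of arity k is interpreted as a function on lists of objects,
only its values on lists of length k matter. A tuple of n predicates is given by an
index function (i < n) with arities ar i.\<close>

definition pred_le :: "nat \<Rightarrow> ('a list \<Rightarrow> bool) \<Rightarrow> ('a list \<Rightarrow> bool) \<Rightarrow> bool" where
  "pred_le k P Q \<longleftrightarrow> (\<forall>xs. length xs = k \<longrightarrow> P xs \<longrightarrow> Q xs)"

definition tup_le :: "nat \<Rightarrow> (nat \<Rightarrow> nat) \<Rightarrow> (nat \<Rightarrow> 'a list \<Rightarrow> bool)
    \<Rightarrow> (nat \<Rightarrow> 'a list \<Rightarrow> bool) \<Rightarrow> bool" where
  "tup_le n ar P Q \<longleftrightarrow> (\<forall>i<n. pred_le (ar i) (P i) (Q i))"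

definition tup_lt :: "nat \<Rightarrow> (nat \<Rightarrow> nat) \<Rightarrow> (nat \<Rightarrow> 'a list \<Rightarrow> bool)
    \<Rightarrow> (nat \<Rightarrow> 'a list \<Rightarrow> bool) \<Rightarrow> bool" where
  "tup_lt n ar P Q \<longleftrightarrow> tup_le n ar P Q \<and> \<not> tup_le n ar Q P"

definition cat :: "nat \<Rightarrow> (nat \<Rightarrow> 'b) \<Rightarrow> (nat \<Rightarrow> 'b) \<Rightarrow> nat \<Rightarrow> 'b" where
  "cat n A B i = (if i < n then A i else B (i - n))"

definition neg_pred :: "('a list \<Rightarrow> bool) \<Rightarrow> 'a list \<Rightarrow> bool" where
  "neg_pred P = (\<lambda>xs. \<not> P xs)"

end

theory Submission
  imports Defs
begin

text \<open>Assume (u, uh) \<le> (p, \<not> p) componentwise. Then for each index i the pair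
  (u i, uh i) lies below the partition (p i, \<not> p i), so it reaches it in both components
  exactly when u i \<or> uh i holds on every tuple. Hence the inequality is strict iff some
  tuple is missed by both u i and uh i.\<close>

lemma tup_le_cat:
  "tup_le (2 * n) (cat n ar ar) (cat n A B) (cat n C D) \<longleftrightarrow>
   (\<forall>i<n. pred_le (ar i) (A i) (C i) \<and> pred_le (ar i) (B i) (D i))"
proof
  assume le: "tup_le (2 * n) (cat n ar ar) (cat n A B) (cat n C D)"
  show "\<forall>i<n. pred_le (ar i) (A i) (C i) \<and> pred_le (ar i) (B i) (D i)"
  proof (intro allI impI conjI)
    fix i assume "i < n"
    then show "pred_le (ar i) (A i) (C i)" and "pred_le (ar i) (B i) (D i)"
      using le[unfolded tup_le_def, rule_format, of i]
        le[unfolded tup_le_def, rule_format, of "i + n"]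
      by (auto simp: cat_def)
  qed
next
  assume le: "\<forall>i<n. pred_le (ar i) (A i) (C i) \<and> pred_le (ar i) (B i) (D i)"
  show "tup_le (2 * n) (cat n ar ar) (cat n A B) (cat n C D)"
    unfolding tup_le_def
  proof (intro allI impI)
    fix i assume "i < 2 * n"
    then show "pred_le (cat n ar ar i) (cat n A B i) (cat n C D i)"
      using le[rule_format, of i] le[rule_format, of "i - n"] by (auto simp: cat_def)
  qed
qed

lemma pred_le_complement_pair_iff:
  assumes "pred_le k U P" and "pred_le k V (neg_pred P)"
  shows "pred_le k P U \<and> pred_le k (neg_pred P) V \<longleftrightarrow>
         (\<forall>xs. length xs = k \<longrightarrow> U xs \<or> V xs)"
  using assms unfolding pred_le_def neg_pred_def by blast

lemma tup_lt_cat_complement_iff: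
  assumes "tup_le (2 * n) (cat n ar ar) (cat n U V) (cat n P (\<lambda>i. neg_pred (P i)))"
  shows "tup_lt (2 * n) (cat n ar ar) (cat n U V) (cat n P (\<lambda>i. neg_pred (P i))) \<longleftrightarrow>
         (\<exists>i<n. \<exists>xs. length xs = ar i \<and> \<not> U i xs \<and> \<not> V i xs)"
proof -
  have below: "\<forall>i<n. pred_le (ar i) (U i) (P i) \<and> pred_le (ar i) (V i) (neg_pred (P i))"
    using assms by (simp add: tup_le_cat)
  have "tup_le (2 * n) (cat n ar ar) (cat n P (\<lambda>i. neg_pred (P i))) (cat n U V) \<longleftrightarrow>
        (\<forall>i<n. \<forall>xs. length xs = ar i \<longrightarrow> U i xs \<or> V i xs)"
    using below by (simp add: tup_le_cat pred_le_complement_pair_iff)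
  then show ?thesis
    using assms by (auto simp: tup_lt_def)
qed

theorem lemma1:
  fixes n :: nat and ar :: "nat \<Rightarrow> nat"
    and p u uh :: "nat \<Rightarrow> 'a list \<Rightarrow> bool"
  shows "tup_lt (2 * n) (cat n ar ar) (cat n u uh) (cat n p (\<lambda>i. neg_pred (p i)))
     \<longleftrightarrow> (\<exists>i<n. tup_le (2 * n) (cat n ar ar) (cat n u uh) (cat n p (\<lambda>i. neg_pred (p i)))
                 \<and> (\<exists>xs. length xs = ar i \<and> \<not> u i xs \<and> \<not> uh i xs))"
  using tup_lt_cat_complement_iff[of n ar u uh p]
  by (auto simp: tup_lt_def)

end
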